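(* Let $\lambda=(\lambda_1,\dots,\lambda_l)$ be a partition, $\tau(t)=s_\lambda(t)+\sum_{\lambda<\mu}\xi_\mu s_\mu(t)$ with arbitrary $\xi_\mu\in\mathbb C$, and $0\le k\le l-1$. If $\mathrm{wt}\,\alpha<N_{\lambda,k}$, then $\partial^\alpha\tau\big(\sum_{i=1}^k[x_i]\big)=0$.
   Context: For $t=(t_1,t_2,\dots)$ define $p_m(t)$ by $\exp(\sum_{m\ge1}t_mk^m)=\sum_{m\ge0}p_m(t)k^m$, $p_m=0$ for $m<0$; $s_\mu(t)=\det(p_{\mu_i-i+j}(t))_{1\le i,j\le l}$. $[x]=(x,x^2/2,\dots)$. For $\alpha=(\alpha_1,\alpha_2,\dots)$ with finitely many nonzero entries, $\partial^\alpha=\prod_i(\partial/\partial t_i)^{\alpha_i}$, $\mathrm{wt}\,\alpha=\sum_ii\alpha_i$. $N_{\lambda,k}=\lambda_{k+1}+\dots+\lambda_l$. $\lambda<\mu$ means $\lambda_i\le\mu_i$ for all $i$ and $\lambda\ne\mu$. $\tau$ is a formal series, differentiated termwise, evaluations being formal power series in the $x_i$; for $k=0$ evaluation is at $t=0$. *)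

theory Defs
  imports "HOL-Library.Poly_Mapping" "HOL-Analysis.Infinite_Sum" "Jordan_Normal_Form.Determinant"
begin

text \<open>Polynomials in the variables t_1, t_2, ... (variable t_i is index i; index 0 is
  never used), and likewise polynomials in x_1,...,x_k, with complex coefficients.\<close>
type_synonym cpoly = "(nat \<Rightarrow>\<^sub>0 nat) \<Rightarrow>\<^sub>0 complex"

definition wt :: "(nat \<Rightarrow>\<^sub>0 nat) \<Rightarrow> nat" where
  "wt a = (\<Sum>i\<in>Poly_Mapping.keys a. i * Poly_Mapping.lookup a i)"

text \<open>p_m(t): coefficient of k^m in exp(sum_m t_m k^m) = prod_m sum_a t_m^a k^(m a)/a!,
  i.e. the sum over multi-indices a (supported on indices >= 1) of weight m of t^a / a!;
  and p_m = 0 for m < 0.\<close>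
definition p_poly :: "int \<Rightarrow> cpoly" where
  "p_poly m = (if m < 0 then 0 else
     (\<Sum>a\<in>{a. Poly_Mapping.lookup a 0 = 0 \<and> wt a = nat m}.
        Poly_Mapping.single a (1 / of_nat (\<Prod>i\<in>Poly_Mapping.keys a. fact (Poly_Mapping.lookup a i)))))"

definition schur :: "nat list \<Rightarrow> cpoly" where
  "schur mu = det (mat (length mu) (length mu)
      (\<lambda>(i, j). p_poly (int (mu ! i) - int i + int j)))"

definition is_partition :: "nat list \<Rightarrow> bool" where
  "is_partition mu \<longleftrightarrow> sorted_wrt (\<ge>) mu \<and> 0 \<notin> set mu"

definition part :: "nat list \<Rightarrow> nat \<Rightarrow> nat" where
  "part mu i = (if i < length mu then mu ! i else 0)"

definition part_less :: "nat list \<Rightarrow> nat list \<Rightarrow> bool" where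
  "part_less lam mu \<longleftrightarrow> (\<forall>i. part lam i \<le> part mu i) \<and> lam \<noteq> mu"

definition N_lk :: "nat list \<Rightarrow> nat \<Rightarrow> nat" where
  "N_lk lam k = sum_list (drop k lam)"

definition pD :: "nat \<Rightarrow> cpoly \<Rightarrow> cpoly" where
  "pD i P = (\<Sum>m\<in>Poly_Mapping.keys P.
      Poly_Mapping.single (m - Poly_Mapping.single i 1) (Poly_Mapping.lookup P m * of_nat (Poly_Mapping.lookup m i)))"

definition dpow :: "(nat \<Rightarrow>\<^sub>0 nat) \<Rightarrow> cpoly \<Rightarrow> cpoly" where
  "dpow alpha P = foldr (\<lambda>i. pD i ^^ Poly_Mapping.lookup alpha i) (sorted_list_of_set (Poly_Mapping.keys alpha)) P"

text \<open>The value of t_j at t = [x_1] + ... + [x_k], namely sum_i x_i^j / j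
  (a polynomial in x_1..x_k, variable x_i is index i).\<close>
definition tval :: "nat \<Rightarrow> nat \<Rightarrow> cpoly" where
  "tval k j = (\<Sum>i\<in>{1..k}. Poly_Mapping.single (Poly_Mapping.single i j) (1 / of_nat j))"

text \<open>Evaluation P(sum_{i=1}^k [x_i]); for k = 0 this is evaluation at t = 0.\<close>
definition eval_at :: "nat \<Rightarrow> cpoly \<Rightarrow> cpoly" where
  "eval_at k P = (\<Sum>m\<in>Poly_Mapping.keys P.
      Poly_Mapping.single 0 (Poly_Mapping.lookup P m) * (\<Prod>j\<in>Poly_Mapping.keys m. tval k j ^ Poly_Mapping.lookup m j))"

end

theory Submission
  imports Defs
begin

(* Differentiating s_mu = det(p_{mu_i - i + j}) with d/dt_s p_m = p_{m-s} lowers one row index at a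
   time, so \<partial>^alpha s_mu is a sum of determinants det(p_{b_i + j}) with b_i \<le> mu_i - i and total
   deficit sum_i (mu_i - i - b_i) = wt alpha.  At t = [x_1] + ... + [x_k] the entry p_n becomes the
   complete homogeneous polynomial h_n(x_1, ..., x_k); from h_n(x_1..x_k) = h_n(x_1..x_{k-1}) +
   x_k h_{n-1}(x_1..x_k), column operations replace column j by h(x_1, ..., x_{k - min j k}), so every
   column j \<ge> k consists of h_n() = [n = 0].  A nonzero term sign(p) prod_i h_{b_i + p i} of the
   determinant then needs b_i = - p i on the l - k rows sent to these columns, which forces the
   deficit to be at least mu_{k+1} + ... + mu_l \<ge> N_{lambda,k} > wt alpha. *)

section \<open>Derivations and evaluation\<close>

definition lin_ext :: "((nat \<Rightarrow>\<^sub>0 nat) \<Rightarrow> complex \<Rightarrow> 'b::comm_monoid_add) \<Rightarrow> cpoly \<Rightarrow> 'b" where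
  "lin_ext f P = (\<Sum>m\<in>Poly_Mapping.keys P. f m (Poly_Mapping.lookup P m))"

lemma lin_ext_zero [simp]: "lin_ext f 0 = 0"
  by (simp add: lin_ext_def)

lemma lin_ext_add:
  assumes "\<And>m. f m 0 = 0" and "\<And>m a b. f m (a + b) = f m a + f m b"
  shows "lin_ext f (P + Q) = lin_ext f P + lin_ext f Q"
  unfolding lin_ext_def by (rule setsum_keys_plus_distrib) (use assms in auto)

lemma lin_ext_sum:
  assumes "\<And>m. f m 0 = 0" and "\<And>m a b. f m (a + b) = f m a + f m b"
  shows "lin_ext f (sum F A) = (\<Sum>a\<in>A. lin_ext f (F a))"
  by (induction A rule: infinite_finite_induct) (simp_all add: lin_ext_add[OF assms])

lemma lin_ext_single: "(\<And>m. f m 0 = 0) \<Longrightarrow> lin_ext f (Poly_Mapping.single m c) = f m c"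
  by (simp add: lin_ext_def)

lemma sum_single_lookup_keys: "(\<Sum>m\<in>Poly_Mapping.keys P. Poly_Mapping.single m (Poly_Mapping.lookup P m)) = P"
  by (rule poly_mapping_eqI) (simp add: lookup_sum lookup_single when_def in_keys_iff)

lemma times_cpoly_expand:
  "(P::cpoly) * Q = (\<Sum>m\<in>Poly_Mapping.keys P. \<Sum>n\<in>Poly_Mapping.keys Q.
     Poly_Mapping.single m (Poly_Mapping.lookup P m) * Poly_Mapping.single n (Poly_Mapping.lookup Q n))"
  by (simp only: sum_product[symmetric] sum_single_lookup_keys)

lemma pD_eq_lin_ext:
  "pD i = lin_ext (\<lambda>m c. Poly_Mapping.single (m - Poly_Mapping.single i 1) (c * of_nat (Poly_Mapping.lookup m i)))"
  by (simp add: fun_eq_iff pD_def lin_ext_def)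

lemma pD_single:
  "pD i (Poly_Mapping.single m c) =
   Poly_Mapping.single (m - Poly_Mapping.single i 1) (c * of_nat (Poly_Mapping.lookup m i))"
  by (simp add: pD_eq_lin_ext lin_ext_single)

lemma pD_add: "pD i (P + Q) = pD i P + pD i Q"
  unfolding pD_eq_lin_ext by (rule lin_ext_add) (simp_all add: distrib_right single_add)

lemma pD_sum: "pD i (sum F A) = (\<Sum>a\<in>A. pD i (F a))"
  unfolding pD_eq_lin_ext by (rule lin_ext_sum) (simp_all add: distrib_right single_add)

lemma pD_zero [simp]: "pD i 0 = 0"
  by (simp add: pD_def)

lemma pD_of_int [simp]: "pD i (of_int z) = 0"
  using pD_single[of i 0 "of_int z"] by simp

lemma single_diff_unit_add:
  "Poly_Mapping.single (m - Poly_Mapping.single i 1 + n) (c * of_nat (Poly_Mapping.lookup m i)) =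
   Poly_Mapping.single (m + n - Poly_Mapping.single i 1) (c * of_nat (Poly_Mapping.lookup m i) :: complex)"
proof (cases "Poly_Mapping.lookup m i = 0")
  case False
  then have "m - Poly_Mapping.single i 1 + n = m + n - Poly_Mapping.single i 1"
    by (intro poly_mapping_eqI) (auto simp: lookup_add lookup_minus lookup_single when_def)
  then show ?thesis by simp
qed simp

lemma pD_single_mult_single:
  "pD i (Poly_Mapping.single m a * Poly_Mapping.single n b) =
   pD i (Poly_Mapping.single m a) * Poly_Mapping.single n b +
   Poly_Mapping.single m a * pD i (Poly_Mapping.single n b)"
proof -
  let ?e = "Poly_Mapping.single i 1"
  have "pD i (Poly_Mapping.single m a) * Poly_Mapping.single n b =
      Poly_Mapping.single (m - ?e + n) (a * b * of_nat (Poly_Mapping.lookup m i))"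
    by (simp add: pD_single mult_single mult_ac; metis add.commute)
  also have "\<dots> = Poly_Mapping.single (m + n - ?e) (a * b * of_nat (Poly_Mapping.lookup m i))"
    by (rule single_diff_unit_add)
  finally have left: "pD i (Poly_Mapping.single m a) * Poly_Mapping.single n b =
      Poly_Mapping.single (m + n - ?e) (a * b * of_nat (Poly_Mapping.lookup m i))" .
  have "Poly_Mapping.single m a * pD i (Poly_Mapping.single n b) =
      Poly_Mapping.single (n - ?e + m) (a * b * of_nat (Poly_Mapping.lookup n i))"
    by (simp add: pD_single mult_single mult_ac; metis add.commute)
  also have "\<dots> = Poly_Mapping.single (m + n - ?e) (a * b * of_nat (Poly_Mapping.lookup n i))"
    by (subst single_diff_unit_add) (simp add: add.commute)
  finally have right: "Poly_Mapping.single m a * pD i (Poly_Mapping.single n b) =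
      Poly_Mapping.single (m + n - ?e) (a * b * of_nat (Poly_Mapping.lookup n i))" .
  show ?thesis
    unfolding left right by (simp add: mult_single pD_single lookup_add distrib_left single_add[symmetric])
qed

lemma pD_mult: "pD i (P * Q) = pD i P * Q + P * pD i Q"
proof -
  let ?sP = "\<lambda>m. Poly_Mapping.single m (Poly_Mapping.lookup P m)"
  let ?sQ = "\<lambda>n. Poly_Mapping.single n (Poly_Mapping.lookup Q n)"
  have "pD i (P * Q) = (\<Sum>m\<in>Poly_Mapping.keys P. \<Sum>n\<in>Poly_Mapping.keys Q.
      pD i (?sP m) * ?sQ n + ?sP m * pD i (?sQ n))"
    by (subst times_cpoly_expand) (simp only: pD_sum pD_single_mult_single)
  also have "\<dots> = pD i (\<Sum>m\<in>Poly_Mapping.keys P. ?sP m) * (\<Sum>n\<in>Poly_Mapping.keys Q. ?sQ n)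
      + (\<Sum>m\<in>Poly_Mapping.keys P. ?sP m) * pD i (\<Sum>n\<in>Poly_Mapping.keys Q. ?sQ n)"
    by (simp only: pD_sum sum_product sum.distrib)
  finally show ?thesis
    by (simp only: sum_single_lookup_keys)
qed

lemma pD_prod:
  "pD s (\<Prod>i\<in>A. F i) = (\<Sum>r\<in>A. \<Prod>i\<in>A. if i = r then pD s (F i) else F i)"
proof (induction A rule: infinite_finite_induct)
  case (insert a A)
  let ?D = "\<lambda>r i. if i = r then pD s (F i) else F i"
  have at_a: "(\<Prod>i\<in>insert a A. ?D a i) = pD s (F a) * (\<Prod>i\<in>A. F i)"
    using insert by (auto intro!: prod.cong)
  have at_r: "(\<Prod>i\<in>insert a A. ?D r i) = F a * (\<Prod>i\<in>A. ?D r i)" if "r \<in> A" for r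
    using insert that by auto
  have "pD s (\<Prod>i\<in>insert a A. F i) = pD s (F a) * (\<Prod>i\<in>A. F i) + F a * pD s (\<Prod>i\<in>A. F i)"
    using insert by (simp add: pD_mult)
  also have "\<dots> = (\<Prod>i\<in>insert a A. ?D a i) + (\<Sum>r\<in>A. \<Prod>i\<in>insert a A. ?D r i)"
    by (simp add: insert.IH at_a at_r sum_distrib_left)
  finally show ?case
    using insert by simp
qed (simp_all add: pD_single[of s 0 1, simplified])

definition eval_monomial :: "nat \<Rightarrow> (nat \<Rightarrow>\<^sub>0 nat) \<Rightarrow> cpoly" where
  "eval_monomial k m = (\<Prod>j\<in>Poly_Mapping.keys m. tval k j ^ Poly_Mapping.lookup m j)"

lemma eval_monomial_superset:
  assumes "finite A" "Poly_Mapping.keys m \<subseteq> A"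
  shows "eval_monomial k m = (\<Prod>j\<in>A. tval k j ^ Poly_Mapping.lookup m j)"
  unfolding eval_monomial_def
  by (rule prod.mono_neutral_left) (use assms in \<open>auto simp: not_in_keys_iff_lookup_eq_zero\<close>)

lemma eval_monomial_add: "eval_monomial k (m + n) = eval_monomial k m * eval_monomial k n"
proof -
  let ?A = "Poly_Mapping.keys m \<union> Poly_Mapping.keys n"
  have "eval_monomial k (m + n) =
      (\<Prod>j\<in>?A. tval k j ^ Poly_Mapping.lookup m j) * (\<Prod>j\<in>?A. tval k j ^ Poly_Mapping.lookup n j)"
    by (subst eval_monomial_superset[of ?A]) (auto simp: keys_add lookup_add power_add prod.distrib)
  then show ?thesis
    by (simp add: eval_monomial_superset[of ?A m] eval_monomial_superset[of ?A n])
qed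

lemma eval_at_eq_lin_ext: "eval_at k = lin_ext (\<lambda>m c. Poly_Mapping.single 0 c * eval_monomial k m)"
  by (simp add: fun_eq_iff eval_at_def lin_ext_def eval_monomial_def)

lemma eval_at_single: "eval_at k (Poly_Mapping.single m c) = Poly_Mapping.single 0 c * eval_monomial k m"
  by (simp add: eval_at_eq_lin_ext lin_ext_single)

lemma eval_at_add: "eval_at k (P + Q) = eval_at k P + eval_at k Q"
  unfolding eval_at_eq_lin_ext by (rule lin_ext_add) (simp_all add: distrib_right single_add)

lemma eval_at_sum: "eval_at k (sum F A) = (\<Sum>a\<in>A. eval_at k (F a))"
  unfolding eval_at_eq_lin_ext by (rule lin_ext_sum) (simp_all add: distrib_right single_add)

lemma eval_at_mult: "eval_at k (P * Q) = eval_at k P * eval_at k Q"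
proof -
  let ?sP = "\<lambda>m. Poly_Mapping.single m (Poly_Mapping.lookup P m)"
  let ?sQ = "\<lambda>n. Poly_Mapping.single n (Poly_Mapping.lookup Q n)"
  have mono: "eval_at k (Poly_Mapping.single m a * Poly_Mapping.single n b) =
      eval_at k (Poly_Mapping.single m a) * eval_at k (Poly_Mapping.single n b)" for m n a b
    using mult_single[of 0 a 0 b] by (simp add: mult_single eval_at_single eval_monomial_add mult_ac)
  have "eval_at k (P * Q) = (\<Sum>m\<in>Poly_Mapping.keys P. \<Sum>n\<in>Poly_Mapping.keys Q.
      eval_at k (?sP m) * eval_at k (?sQ n))"
    by (subst times_cpoly_expand) (simp only: eval_at_sum mono)
  also have "\<dots> =
      eval_at k (\<Sum>m\<in>Poly_Mapping.keys P. ?sP m) * eval_at k (\<Sum>n\<in>Poly_Mapping.keys Q. ?sQ n)"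
    by (simp only: eval_at_sum sum_product)
  finally show ?thesis
    by (simp only: sum_single_lookup_keys)
qed

lemma eval_at_zero: "eval_at k 0 = 0"
  by (simp add: eval_at_def)

lemma eval_at_one: "eval_at k 1 = 1"
  using eval_at_single[of k 0 1] by (simp add: eval_monomial_def)

lemma comm_ring_hom_eval_at: "comm_ring_hom (eval_at k)"
  by unfold_locales (simp_all add: eval_at_add eval_at_mult eval_at_one eval_at_zero)

section \<open>The polynomials \<open>p\<^sub>m\<close>\<close>

definition weight_indices :: "nat \<Rightarrow> (nat \<Rightarrow>\<^sub>0 nat) set" where
  "weight_indices n = {a. Poly_Mapping.lookup a 0 = 0 \<and> wt a = n}"

definition mfact :: "(nat \<Rightarrow>\<^sub>0 nat) \<Rightarrow> nat" where
  "mfact a = (\<Prod>i\<in>Poly_Mapping.keys a. fact (Poly_Mapping.lookup a i))"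

lemma p_poly_nat:
  "p_poly (int n) = (\<Sum>a\<in>weight_indices n. Poly_Mapping.single a (1 / of_nat (mfact a)))"
  by (simp add: p_poly_def weight_indices_def mfact_def)

lemma p_poly_neg: "m < 0 \<Longrightarrow> p_poly m = 0"
  by (simp add: p_poly_def)

lemma wt_eq_sum_superset:
  assumes "finite A" "Poly_Mapping.keys a \<subseteq> A"
  shows "wt a = (\<Sum>i\<in>A. i * Poly_Mapping.lookup a i)"
  unfolding wt_def
  by (rule sum.mono_neutral_left) (use assms in \<open>auto simp: not_in_keys_iff_lookup_eq_zero\<close>)

lemma wt_add: "wt (a + b) = wt a + wt b"
proof -
  let ?A = "Poly_Mapping.keys a \<union> Poly_Mapping.keys b"
  have "wt (a + b) = (\<Sum>i\<in>?A. i * Poly_Mapping.lookup a i) + (\<Sum>i\<in>?A. i * Poly_Mapping.lookup b i)"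
    by (subst wt_eq_sum_superset[of ?A]) (auto simp: keys_add lookup_add sum.distrib algebra_simps)
  then show ?thesis
    by (simp add: wt_eq_sum_superset[of ?A a] wt_eq_sum_superset[of ?A b])
qed

lemma wt_single: "wt (Poly_Mapping.single i n) = i * n"
  by (simp add: wt_def)

lemma mult_lookup_le_wt: "i * Poly_Mapping.lookup a i \<le> wt a"
  by (cases "i \<in> Poly_Mapping.keys a")
     (auto simp: wt_def not_in_keys_iff_lookup_eq_zero intro: member_le_sum)

lemma keys_subset_if_weight_indices:
  assumes "a \<in> weight_indices n"
  shows "Poly_Mapping.keys a \<subseteq> {1..n}"
proof
  fix i assume i: "i \<in> Poly_Mapping.keys a"
  then have "i \<le> i * Poly_Mapping.lookup a i"
    by (simp add: in_keys_iff)
  also have "\<dots> \<le> n"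
    using mult_lookup_le_wt[of i a] assms by (simp add: weight_indices_def)
  finally show "i \<in> {1..n}"
    using i assms by (cases "i = 0") (auto simp: weight_indices_def in_keys_iff)
qed

lemma finite_weight_indices: "finite (weight_indices n)"
proof -
  let ?F = "{f. \<forall>x. (x \<in> {..n} \<longrightarrow> f x \<in> {..n}) \<and> (x \<notin> {..n} \<longrightarrow> f x = (0::nat))}"
  have "Poly_Mapping.lookup a \<in> ?F" if a: "a \<in> weight_indices n" for a
  proof -
    have "Poly_Mapping.lookup a i \<le> n" for i
    proof (cases "i \<in> Poly_Mapping.keys a")
      case True
      then have "Poly_Mapping.lookup a i \<le> i * Poly_Mapping.lookup a i"
        using keys_subset_if_weight_indices[OF a] by auto
      also have "\<dots> \<le> n"
        using mult_lookup_le_wt[of i a] a by (simp add: weight_indices_def)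
      finally show ?thesis .
    qed (simp add: in_keys_iff)
    moreover have "Poly_Mapping.lookup a i = 0" if "i \<notin> {..n}" for i
      using keys_subset_if_weight_indices[OF a] that by (auto simp: in_keys_iff)
    ultimately show ?thesis
      by auto
  qed
  then have "finite (Poly_Mapping.lookup ` weight_indices n)"
    by (intro finite_subset[OF _ finite_set_of_finite_funs[of "{..n}" "{..n}"]]) auto
  then show ?thesis
    by (rule finite_imageD) (meson inj_onI lookup_inject)
qed

lemma weight_indices_0: "weight_indices 0 = {0}"
proof -
  have "a = 0" if "a \<in> weight_indices 0" for a
    using keys_subset_if_weight_indices[OF that] by simp
  then show ?thesis
    by (auto simp: weight_indices_def wt_def)
qed

lemma p_poly_0: "p_poly 0 = 1"
  using p_poly_nat[of 0] by (simp add: weight_indices_0 mfact_def)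

lemma mfact_add_unit:
  "mfact (b + Poly_Mapping.single s 1) = mfact b * (Poly_Mapping.lookup b s + 1)"
proof -
  let ?A = "insert s (Poly_Mapping.keys b)"
  have "mfact (b + Poly_Mapping.single s 1) = (\<Prod>i\<in>?A. fact (Poly_Mapping.lookup (b + Poly_Mapping.single s 1) i))"
    unfolding mfact_def
    by (rule prod.mono_neutral_left) (auto simp: keys_add lookup_add lookup_single in_keys_iff when_def split: if_splits)
  also have "\<dots> = fact (Poly_Mapping.lookup b s + 1) * (\<Prod>i\<in>?A - {s}. fact (Poly_Mapping.lookup b i))"
    by (subst prod.remove[of _ s]) (auto simp: lookup_add lookup_single intro!: prod.cong)
  also have "mfact b = fact (Poly_Mapping.lookup b s) * (\<Prod>i\<in>?A - {s}. fact (Poly_Mapping.lookup b i))"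
    unfolding mfact_def
    by (subst prod.mono_neutral_left[of ?A]) (auto simp: in_keys_iff prod.remove[of _ s])
  ultimately show ?thesis
    by (simp add: algebra_simps)
qed

lemma pD_single_inverse_mfact:
  "pD s (Poly_Mapping.single (b + Poly_Mapping.single s 1) (1 / of_nat (mfact (b + Poly_Mapping.single s 1))))
   = Poly_Mapping.single b (1 / of_nat (mfact b))"
proof -
  let ?f = "of_nat (mfact b) :: complex" and ?x = "of_nat (Poly_Mapping.lookup b s + 1) :: complex"
  have "?f \<noteq> 0" "?x \<noteq> 0"
    unfolding of_nat_eq_0_iff by (simp_all add: mfact_def)
  then have "1 / (?f * ?x) * ?x = 1 / ?f"
    by simp
  then show ?thesis
    by (simp only: pD_single mfact_add_unit of_nat_mult) (simp add: lookup_add)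
qed

lemma diff_unit_add_cancel:
  "Poly_Mapping.lookup a s \<noteq> 0 \<Longrightarrow> a - Poly_Mapping.single s 1 + Poly_Mapping.single s (1::nat) = a"
  by (rule poly_mapping_eqI) (auto simp: lookup_add lookup_minus lookup_single when_def)

lemma weight_indices_shift:
  assumes "s \<ge> 1"
  shows "{a \<in> weight_indices n. Poly_Mapping.lookup a s \<noteq> 0}
    = (\<lambda>b. b + Poly_Mapping.single s 1) ` {b. Poly_Mapping.lookup b 0 = 0 \<and> wt b + s = n}"
    (is "?L = (\<lambda>b. b + ?e) ` ?B")
proof
  show "?L \<subseteq> (\<lambda>b. b + ?e) ` ?B"
  proof
    fix a assume a: "a \<in> ?L"
    then have a_eq: "(a - ?e) + ?e = a"
      by (intro diff_unit_add_cancel) simp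
    then have "wt (a - ?e) + s = n"
      using a wt_add[of "a - ?e" ?e] by (simp add: wt_single weight_indices_def)
    with a a_eq show "a \<in> (\<lambda>b. b + ?e) ` ?B"
      by (intro image_eqI[of _ _ "a - ?e"]) (auto simp: weight_indices_def lookup_minus)
  qed
qed (use assms in \<open>auto simp: weight_indices_def wt_add wt_single lookup_add lookup_single\<close>)

lemma p_poly_diff_eq_sum:
  "p_poly (int n - int s) =
   (\<Sum>b | Poly_Mapping.lookup b 0 = 0 \<and> wt b + s = n. Poly_Mapping.single b (1 / of_nat (mfact b)))"
proof (cases "s \<le> n")
  case True
  then have "{b. Poly_Mapping.lookup b 0 = 0 \<and> wt b + s = n} = weight_indices (n - s)"
    by (auto simp: weight_indices_def)
  with True show ?thesis
    by (simp add: p_poly_nat[symmetric] of_nat_diff)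
next
  case False
  then have "{b. Poly_Mapping.lookup b 0 = 0 \<and> wt b + s = n} = {}"
    by auto
  with False show ?thesis
    by (simp add: p_poly_neg)
qed

lemma pD_p_poly:
  assumes "s \<ge> 1"
  shows "pD s (p_poly m) = p_poly (m - int s)"
proof (cases "m < 0")
  case True
  then show ?thesis by (simp add: p_poly_neg)
next
  case False
  then obtain n where m: "m = int n"
    by (metis nonneg_int_cases not_less)
  let ?e = "Poly_Mapping.single s 1"
  let ?B = "{b. Poly_Mapping.lookup b 0 = 0 \<and> wt b + s = n}"
  let ?c = "\<lambda>a. Poly_Mapping.single a (1 / of_nat (mfact a) :: complex)"
  have inj: "inj_on (\<lambda>b. b + ?e) ?B"
    by (simp add: inj_on_def)
  have "pD s (p_poly m) = (\<Sum>a\<in>weight_indices n. pD s (?c a))"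
    by (simp only: m p_poly_nat pD_sum)
  also have "\<dots> = (\<Sum>a\<in>{a \<in> weight_indices n. Poly_Mapping.lookup a s \<noteq> 0}. pD s (?c a))"
    by (rule sum.mono_neutral_right) (auto simp: finite_weight_indices pD_single)
  also have "\<dots> = (\<Sum>b\<in>?B. ?c b)"
    by (simp only: weight_indices_shift[OF assms] sum.reindex[OF inj] comp_def pD_single_inverse_mfact)
  finally show ?thesis
    by (simp only: m p_poly_diff_eq_sum)
qed

(* The variable with index i: t_i before evaluation, x_i after it. *)
definition var :: "nat \<Rightarrow> cpoly" where
  "var i = Poly_Mapping.single (Poly_Mapping.single i 1) 1"

lemma of_nat_mult_single:
  "(of_nat j :: cpoly) * Poly_Mapping.single a c = Poly_Mapping.single a (of_nat j * c)"
  by (metis single_of_nat mult_single add_0)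

lemma single_sum: "Poly_Mapping.single a (sum f A) = (\<Sum>i\<in>A. Poly_Mapping.single a (f i))"
  by (induction A rule: infinite_finite_induct) (simp_all add: single_add)

lemma var_mult_pD_single:
  "var j * pD j (Poly_Mapping.single a c) = Poly_Mapping.single a (c * of_nat (Poly_Mapping.lookup a j))"
proof (cases "Poly_Mapping.lookup a j = 0")
  case False
  then show ?thesis
    using diff_unit_add_cancel[OF False] by (simp add: var_def pD_single mult_single add.commute)
qed (simp add: pD_single)

lemma euler_identity_single:
  assumes "a \<in> weight_indices n"
  shows "(\<Sum>j=1..n. of_nat j * var j * pD j (Poly_Mapping.single a c)) = of_nat n * Poly_Mapping.single a c"
proof -
  have "(\<Sum>j=1..n. of_nat j * var j * pD j (Poly_Mapping.single a c))
      = (\<Sum>j=1..n. Poly_Mapping.single a (c * of_nat (j * Poly_Mapping.lookup a j)))"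
    by (simp only: mult.assoc var_mult_pD_single of_nat_mult_single) (simp add: mult_ac)
  also have "\<dots> = Poly_Mapping.single a (c * of_nat (\<Sum>j=1..n. j * Poly_Mapping.lookup a j))"
    by (simp add: sum_distrib_left single_sum)
  also have "(\<Sum>j=1..n. j * Poly_Mapping.lookup a j) = n"
    using assms wt_eq_sum_superset[OF _ keys_subset_if_weight_indices[OF assms]]
    by (simp add: weight_indices_def)
  finally show ?thesis
    by (simp add: of_nat_mult_single mult.commute)
qed

(* Euler's identity for p_n, which is homogeneous of degree n when t_j has degree j,
   combined with \<partial>p_n/\<partial>t_j = p_{n-j}. *)
lemma p_poly_newton:
  "of_nat n * p_poly (int n) = (\<Sum>j=1..n. of_nat j * var j * p_poly (int n - int j))"
proof -
  have "(\<Sum>j=1..n. of_nat j * var j * p_poly (int n - int j))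
      = (\<Sum>a\<in>weight_indices n. \<Sum>j=1..n. of_nat j * var j * pD j (Poly_Mapping.single a (1 / of_nat (mfact a))))"
    by (simp add: pD_p_poly[symmetric] p_poly_nat pD_sum sum_distrib_left) (rule sum.swap)
  also have "\<dots> = (\<Sum>a\<in>weight_indices n. of_nat n * Poly_Mapping.single a (1 / of_nat (mfact a)))"
    by (intro sum.cong refl euler_identity_single)
  also have "\<dots> = of_nat n * p_poly (int n)"
    by (simp add: p_poly_nat sum_distrib_left)
  finally show ?thesis ..
qed

section \<open>Complete homogeneous polynomials\<close>

lemma newton_sequence_unique:
  fixes f g :: "nat \<Rightarrow> 'a::{idom, ring_char_0}"
  assumes f: "\<And>n. of_nat n * f n = (\<Sum>j<n. c (Suc j) * f (n - Suc j))"
    and g: "\<And>n. of_nat n * g n = (\<Sum>j<n. c (Suc j) * g (n - Suc j))"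
    and "f 0 = g 0"
  shows "f n = g n"
proof (induction n rule: less_induct)
  case (less n)
  show ?case
  proof (cases "n = 0")
    case False
    have "of_nat n * f n = of_nat n * g n"
      unfolding f g using less.IH by (intro sum.cong) auto
    with False show ?thesis by simp
  qed (use assms(3) in simp)
qed

(* In generating-function terms: if G'/G = S + x/(1 - xz) then F = (1 - xz) G has F'/F = S. *)
lemma newton_sequence_deflate:
  fixes g f :: "nat \<Rightarrow> 'a::comm_ring_1"
  assumes g: "\<And>n. of_nat n * g n = (\<Sum>j<n. (s (Suc j) + x ^ Suc j) * g (n - Suc j))"
    and f0: "f 0 = g 0" and f_Suc: "\<And>m. f (Suc m) = g (Suc m) - x * g m"
  shows "of_nat n * f n = (\<Sum>j<n. s (Suc j) * f (n - Suc j))"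
proof (cases n)
  case (Suc m)
  have f_diff: "f (m - j) = g (m - j) - x * g (m - Suc j)" if "j < m" for j
    using f_Suc[of "m - Suc j"] that by (simp add: Suc_diff_Suc)
  have geom: "(\<Sum>j<Suc m. x ^ Suc j * g (m - j)) = x * g m + x * (\<Sum>j<m. x ^ Suc j * g (m - Suc j))"
    by (subst sum.lessThan_Suc_shift) (simp add: sum_distrib_left mult_ac del: sum.lessThan_Suc)
  have "of_nat n * f n = of_nat (Suc m) * g (Suc m) - x * (of_nat m * g m) - x * g m"
    by (simp add: Suc f_Suc algebra_simps)
  also have "\<dots> = (\<Sum>j<Suc m. s (Suc j) * g (m - j)) + (\<Sum>j<Suc m. x ^ Suc j * g (m - j))
      - (x * (\<Sum>j<m. s (Suc j) * g (m - Suc j)) + x * (\<Sum>j<m. x ^ Suc j * g (m - Suc j))) - x * g m"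
    by (simp only: g distrib_right sum.distrib diff_Suc_Suc distrib_left)
  also have "\<dots> = (\<Sum>j<m. s (Suc j) * (g (m - j) - x * g (m - Suc j))) + s (Suc m) * g 0"
    by (simp only: geom) (simp add: sum_distrib_left right_diff_distrib sum_subtractf algebra_simps)
  also have "\<dots> = (\<Sum>j<n. s (Suc j) * f (n - Suc j))"
    by (simp add: Suc f0 f_diff)
  finally show ?thesis .
qed simp

(* hsym k n is p_n at t = [x_1] + ... + [x_k], the complete homogeneous polynomial h_n(x_1, ..., x_k). *)
definition hsym :: "nat \<Rightarrow> int \<Rightarrow> cpoly" where
  "hsym k n = eval_at k (p_poly n)"

definition psum :: "nat \<Rightarrow> nat \<Rightarrow> cpoly" where
  "psum k j = (\<Sum>i=1..k. var i ^ j)"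

lemma var_power: "var i ^ j = Poly_Mapping.single (Poly_Mapping.single i j) 1"
proof (induction j)
  case (Suc j)
  then show ?case
    by (simp add: var_def mult_single single_add[symmetric])
qed (simp add: var_def)

lemma psum_0: "psum 0 j = 0"
  by (simp add: psum_def)

lemma psum_Suc: "psum (Suc k) j = psum k j + var (Suc k) ^ j"
  by (simp add: psum_def)

lemma of_nat_mult_tval: "j \<ge> 1 \<Longrightarrow> of_nat j * tval k j = psum k j"
  by (simp add: tval_def psum_def var_power sum_distrib_left of_nat_mult_single)

lemma eval_at_var: "eval_at k (var j) = tval k j"
  by (simp add: var_def eval_at_single eval_monomial_def)

lemma hsym_neg: "n < 0 \<Longrightarrow> hsym k n = 0"
  by (simp add: hsym_def p_poly_neg eval_at_def)

lemma hsym_0: "hsym k 0 = 1"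
  by (simp add: hsym_def p_poly_0 eval_at_one)

lemma hsym_newton:
  "of_nat n * hsym k (int n) = (\<Sum>j<n. psum k (Suc j) * hsym k (int (n - Suc j)))"
proof -
  interpret eval: comm_ring_hom "eval_at k"
    by (rule comm_ring_hom_eval_at)
  have "of_nat n * hsym k (int n) = eval_at k (of_nat n * p_poly (int n))"
    by (simp only: hsym_def eval.hom_mult eval.hom_of_nat)
  also have "\<dots> = (\<Sum>j=1..n. eval_at k (of_nat j * var j * p_poly (int n - int j)))"
    by (subst p_poly_newton) (rule eval_at_sum)
  also have "\<dots> = (\<Sum>j=1..n. psum k j * hsym k (int (n - j)))"
    by (intro sum.cong refl) (simp add: eval.hom_mult eval.hom_of_nat eval_at_var of_nat_mult_tval hsym_def of_nat_diff)
  also have "\<dots> = (\<Sum>j<n. psum k (Suc j) * hsym k (int (n - Suc j)))"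
    by (simp add: sum.atLeast1_atMost_eq)
  finally show ?thesis .
qed

lemma hsym_no_vars: "hsym 0 n = (if n = 0 then 1 else 0)"
proof (cases "n > 0")
  case True
  then obtain m where "n = int m" "m \<noteq> 0"
    by (metis nonneg_int_cases less_imp_le of_nat_0 less_irrefl)
  then show ?thesis
    using hsym_newton[of m 0] by (simp add: psum_0)
qed (auto simp: hsym_neg hsym_0)

lemma hsym_Suc_vars_nat:
  "hsym (Suc k) (int n) = hsym k (int n) + var (Suc k) * hsym (Suc k) (int n - 1)"
proof -
  define g where "g n = hsym (Suc k) (int n)" for n
  define f where "f n = (case n of 0 \<Rightarrow> g 0 | Suc m \<Rightarrow> g (Suc m) - var (Suc k) * g m)" for n
  have "of_nat n * f n = (\<Sum>j<n. psum k (Suc j) * f (n - Suc j))" for n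
    by (rule newton_sequence_deflate[where g = g and x = "var (Suc k)"])
       (simp_all add: f_def g_def hsym_newton psum_Suc)
  then have "f n = hsym k (int n)"
    by (rule newton_sequence_unique) (simp_all add: f_def g_def hsym_newton hsym_0)
  then show ?thesis
    by (cases n) (simp_all add: f_def g_def hsym_neg algebra_simps)
qed

lemma hsym_Suc_vars: "hsym (Suc k) n = hsym k n + var (Suc k) * hsym (Suc k) (n - 1)"
proof (cases "n < 0")
  case False
  then show ?thesis
    using hsym_Suc_vars_nat[of k "nat n"] by simp
qed (simp add: hsym_neg)

section \<open>Determinants of \<open>p\<close>-matrices and their derivatives\<close>

definition pdet :: "nat \<Rightarrow> (nat \<Rightarrow> int) \<Rightarrow> cpoly" where
  "pdet l b = det (mat l l (\<lambda>(i, j). p_poly (b i + int j)))"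

lemma det_mat_expand:
  "det (mat l l f) = (\<Sum>p | p permutes {0..<l}. signof p * (\<Prod>i=0..<l. f (i, p i)))"
proof -
  have "p i < l" if "p permutes {0..<l}" "i < l" for p i
    using that permutes_in_image by fastforce
  then show ?thesis
    by (subst det_def'[of _ l]) (auto intro!: sum.cong prod.cong)
qed

lemma pD_pdet:
  assumes "s \<ge> 1"
  shows "pD s (pdet l b) = (\<Sum>r<l. pdet l (b(r := b r - int s)))"
proof -
  have "pD s (\<Prod>i=0..<l. p_poly (b i + int (p i)))
      = (\<Sum>r<l. \<Prod>i=0..<l. p_poly ((b(r := b r - int s)) i + int (p i)))" for p
    unfolding pD_prod atLeast0LessThan[symmetric]
    by (intro sum.cong refl prod.cong) (auto simp: pD_p_poly[OF assms] algebra_simps)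
  then show ?thesis
    unfolding pdet_def det_mat_expand
    by (simp add: pD_sum pD_mult sum_distrib_left sum.swap[of _ "{..<l}"])
qed

inductive lowered_pdets :: "nat \<Rightarrow> (nat \<Rightarrow> int) \<Rightarrow> nat \<Rightarrow> cpoly \<Rightarrow> bool" for l a where
  zero: "lowered_pdets l a W 0"
| add: "lowered_pdets l a W P \<Longrightarrow> lowered_pdets l a W Q \<Longrightarrow> lowered_pdets l a W (P + Q)"
| pdet: "(\<forall>i<l. b i \<le> a i) \<Longrightarrow> (\<Sum>i<l. a i - b i) = int W \<Longrightarrow>
    lowered_pdets l a W (pdet l b)"

lemma lowered_pdets_sum:
  "(\<And>x. x \<in> A \<Longrightarrow> lowered_pdets l a W (F x)) \<Longrightarrow> lowered_pdets l a W (sum F A)"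
  by (induction A rule: infinite_finite_induct) (auto intro: lowered_pdets.intros)

lemma lowered_pdets_pD:
  assumes "lowered_pdets l a W P" "s \<ge> 1"
  shows "lowered_pdets l a (W + s) (pD s P)"
  using assms(1)
proof induction
  case zero
  then show ?case by (simp add: lowered_pdets.zero)
next
  case (add W P Q)
  then show ?case by (simp add: pD_add lowered_pdets.add)
next
  case (pdet b W)
  have "lowered_pdets l a (W + s) (pdet l (b(r := b r - int s)))" if "r < l" for r
  proof (rule lowered_pdets.pdet)
    show "\<forall>i<l. (b(r := b r - int s)) i \<le> a i"
      using pdet by auto
    have "(\<Sum>i<l. a i - (b(r := b r - int s)) i) = (\<Sum>i<l. (a i - b i) + (if i = r then int s else 0))"
      by (rule sum.cong) auto
    then show "(\<Sum>i<l. a i - (b(r := b r - int s)) i) = int (W + s)"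
      using pdet that by (simp add: sum.distrib)
  qed
  then show ?case
    unfolding pD_pdet[OF assms(2)] by (intro lowered_pdets_sum) simp
qed

lemma lowered_pdets_funpow_pD:
  assumes "lowered_pdets l a W P" "s \<ge> 1"
  shows "lowered_pdets l a (W + n * s) ((pD s ^^ n) P)"
proof (induction n)
  case (Suc n)
  then show ?case
    using lowered_pdets_pD[OF Suc assms(2)] by (simp add: add_ac)
qed (use assms in simp)

lemma lowered_pdets_dpow:
  assumes "lowered_pdets l a W P" "Poly_Mapping.lookup alpha 0 = 0"
  shows "lowered_pdets l a (W + wt alpha) (dpow alpha P)"
proof -
  let ?f = "\<lambda>i. pD i ^^ Poly_Mapping.lookup alpha i"
  have "lowered_pdets l a (W + (\<Sum>i\<leftarrow>xs. i * Poly_Mapping.lookup alpha i)) (foldr ?f xs P)"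
    if "\<forall>i\<in>set xs. i \<ge> 1" for xs
    using that
  proof (induction xs)
    case (Cons x xs)
    then have "lowered_pdets l a
        (W + (\<Sum>i\<leftarrow>xs. i * Poly_Mapping.lookup alpha i) + Poly_Mapping.lookup alpha x * x)
        (?f x (foldr ?f xs P))"
      by (intro lowered_pdets_funpow_pD) auto
    then show ?case
      by (simp add: add_ac mult.commute)
  qed (use assms(1) in simp)
  moreover have "\<forall>i\<in>set (sorted_list_of_set (Poly_Mapping.keys alpha)). i \<ge> 1"
    using assms(2) by (auto simp: in_keys_iff Suc_le_eq intro: gr0I)
  ultimately have "lowered_pdets l a (W + (\<Sum>i\<leftarrow>sorted_list_of_set (Poly_Mapping.keys alpha).
      i * Poly_Mapping.lookup alpha i)) (dpow alpha P)"
    unfolding dpow_def by blast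
  moreover have
    "(\<Sum>i\<leftarrow>sorted_list_of_set (Poly_Mapping.keys alpha). i * Poly_Mapping.lookup alpha i) = wt alpha"
    by (simp add: wt_def sum_list_distinct_conv_sum_set)
  ultimately show ?thesis
    by simp
qed

section \<open>Evaluated determinants\<close>

abbreviation hmat :: "nat \<Rightarrow> (nat \<Rightarrow> int) \<Rightarrow> (nat \<Rightarrow> nat) \<Rightarrow> cpoly mat" where
  "hmat l c lev \<equiv> mat l l (\<lambda>(i, j). hsym (lev j) (c i + int j))"

lemma eval_at_pdet: "eval_at k (pdet l b) = det (hmat l b (\<lambda>j. k))"
proof -
  interpret eval: comm_ring_hom "eval_at k"
    by (rule comm_ring_hom_eval_at)
  have "map_mat (eval_at k) (mat l l (\<lambda>(i, j). p_poly (b i + int j))) = hmat l b (\<lambda>j. k)"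
    by (rule eq_matI) (auto simp: hsym_def)
  then show ?thesis
    unfolding pdet_def by (metis eval.hom_det)
qed

lemma hmat_cong: "(\<And>j. j < l \<Longrightarrow> lev j = lev' j) \<Longrightarrow> hmat l c lev = hmat l c lev'"
  by (rule eq_matI) auto

lemma det_hmat_lower_column:
  assumes "0 < q" "q < l" and lev: "lev q = Suc K" "lev (q - 1) = Suc K"
  shows "det (hmat l c (lev(q := K))) = det (hmat l c lev)"
proof -
  let ?x = "var (Suc K)"
  have "hmat l c (lev(q := K)) = addcol (- ?x) q (q - 1) (hmat l c lev)"
  proof (rule eq_matI)
    fix i j assume "i < dim_row (addcol (- ?x) q (q - 1) (hmat l c lev))"
      "j < dim_col (addcol (- ?x) q (q - 1) (hmat l c lev))"
    then have "i < l" "j < l" by auto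
    moreover have "hsym K (c i + int q) = - ?x * hsym (Suc K) (c i + int (q - 1)) + hsym (Suc K) (c i + int q)"
      using hsym_Suc_vars[of K "c i + int q"] assms(1) by (simp add: of_nat_diff algebra_simps)
    ultimately show "hmat l c (lev(q := K)) $$ (i, j) = addcol (- ?x) q (q - 1) (hmat l c lev) $$ (i, j)"
      using assms by auto
  qed auto
  then show ?thesis
    using assms by (simp add: det_addcol[where n = l])
qed

lemma det_hmat_lower_tail:
  assumes "m < k"
  shows "det (hmat l c (\<lambda>j. k - min j (Suc m))) = det (hmat l c (\<lambda>j. k - min j m))"
proof (cases "Suc m \<le> l")
  case True
  define lev where "lev q j = (if j < q then k - min j m else k - Suc m)" for q j
  have reduce: "det (hmat l c (lev q)) = det (hmat l c (\<lambda>j. k - min j m))" if "Suc m \<le> q" "q \<le> l" for q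
    using that(2,1)
  proof (induction rule: inc_induct)
    case base
    show ?case
      by (rule arg_cong[where f = det], rule hmat_cong) (simp add: lev_def)
  next
    case (step q)
    have "lev q = (lev (Suc q))(q := k - Suc m)"
      by (auto simp: lev_def)
    moreover have "lev (Suc q) q = Suc (k - Suc m)" "lev (Suc q) (q - 1) = Suc (k - Suc m)"
      using assms step.prems by (auto simp: lev_def)
    ultimately show ?case
      using det_hmat_lower_column[of q l "lev (Suc q)" "k - Suc m" c] step by simp
  qed
  moreover have "lev (Suc m) = (\<lambda>j. k - min j (Suc m))"
    by (auto simp: lev_def fun_eq_iff)
  ultimately show ?thesis
    using reduce[of "Suc m"] True by simp
next
  case False
  then show ?thesis
    by (intro arg_cong[where f = det] hmat_cong) auto
qed

lemma det_hmat_staircase: "det (hmat l c (\<lambda>j. k)) = det (hmat l c (\<lambda>j. k - min j k))"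
proof -
  have "det (hmat l c (\<lambda>j. k - min j m)) = det (hmat l c (\<lambda>j. k))" if "m \<le> k" for m
    using that by (induction m) (simp_all add: det_hmat_lower_tail)
  then show ?thesis
    by simp
qed

lemma sum_atLeastLessThan_le_sum_subset:
  fixes f :: "nat \<Rightarrow> 'a::linordered_idom"
  assumes "S \<subseteq> {..<l}" "card S = l - k" and anti: "\<And>i j. i \<le> j \<Longrightarrow> f j \<le> f i"
  shows "sum f {k..<l} \<le> sum f S"
proof -
  let ?T = "{k..<l}"
  have fin: "finite S"
    using assms(1) finite_subset by blast
  then have "card (S - ?T) = card (?T - S)"
    using assms(2) by (simp add: card_Diff_subset_Int Int_commute)
  have "sum f (?T - S) \<le> of_nat (card (?T - S)) * f k"
    by (rule sum_bounded_above) (auto intro: anti)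
  also have "\<dots> = of_nat (card (S - ?T)) * f k"
    using \<open>card (S - ?T) = card (?T - S)\<close> by simp
  also have "\<dots> \<le> sum f (S - ?T)"
    by (rule sum_bounded_below) (use assms(1) in \<open>auto intro: anti\<close>)
  finally show ?thesis
    using fin by (simp add: sum.Int_Diff[of S f ?T] sum.Int_Diff[of ?T f S] Int_commute)
qed

lemma permutes_image_upper_preimage:
  assumes perm: "p permutes {..<l}"
  shows "p ` {i\<in>{..<l}. k \<le> p i} = {k..<l}"
proof
  show "p ` {i\<in>{..<l}. k \<le> p i} \<subseteq> {k..<l}"
  proof
    fix j assume "j \<in> p ` {i\<in>{..<l}. k \<le> p i}"
    then obtain i where "i < l" "k \<le> p i" "j = p i"
      by auto
    then show "j \<in> {k..<l}"
      using permutes_in_image[OF perm, of i] by simp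
  qed
  show "{k..<l} \<subseteq> p ` {i\<in>{..<l}. k \<le> p i}"
  proof
    fix j assume j: "j \<in> {k..<l}"
    then have "j \<in> p ` {..<l}"
      using permutes_image[OF perm] by auto
    with j show "j \<in> p ` {i\<in>{..<l}. k \<le> p i}"
      by auto
  qed
qed

lemma hmat_staircase_perm_term_eq_0:
  fixes mu :: "nat \<Rightarrow> nat"
  assumes perm: "p permutes {..<l}"
    and mono: "\<And>i j. i \<le> j \<Longrightarrow> mu j \<le> mu i"
    and below: "\<forall>i<l. b i \<le> int (mu i) - int i"
    and deficit: "(\<Sum>i<l. int (mu i) - int i - b i) < (\<Sum>i\<in>{k..<l}. int (mu i))"
  shows "(\<Prod>i=0..<l. hsym (k - min (p i) k) (b i + int (p i))) = 0"
proof (rule ccontr)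
  assume "(\<Prod>i=0..<l. hsym (k - min (p i) k) (b i + int (p i))) \<noteq> 0"
  then have nonzero: "hsym (k - min (p i) k) (b i + int (p i)) \<noteq> 0" if "i < l" for i
    using that by auto
  define S where "S = {i\<in>{..<l}. k \<le> p i}"
  have S_sub: "S \<subseteq> {..<l}"
    by (auto simp: S_def)
  have S_diag: "b i = - int (p i)" if "i \<in> S" for i
    using nonzero[of i] that by (auto simp: S_def hsym_no_vars split: if_splits)
  have "p ` S = {k..<l}"
    unfolding S_def by (rule permutes_image_upper_preimage[OF perm])
  moreover have inj: "inj_on p S"
    using permutes_inj[OF perm] by (simp add: inj_on_def inj_def)
  ultimately have card_S: "card S = l - k" and sum_p: "(\<Sum>i\<in>S. int (p i)) = (\<Sum>j\<in>{k..<l}. int j)"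
    using card_image[OF inj] sum.reindex[OF inj, of int] by auto
  have "(\<Sum>i\<in>{k..<l}. int (mu i)) \<le> (\<Sum>i\<in>S. int (mu i))"
    by (rule sum_atLeastLessThan_le_sum_subset[OF S_sub card_S]) (simp add: mono)
  also have "\<dots> \<le> (\<Sum>i\<in>S. int (mu i) - int i + int (p i))"
    using sum_atLeastLessThan_le_sum_subset[OF S_sub card_S, of "\<lambda>i. - int i"] sum_p
    by (simp add: sum.distrib sum_subtractf sum_negf)
  also have "\<dots> = (\<Sum>i\<in>S. int (mu i) - int i - b i)"
    by (simp add: S_diag)
  also have "\<dots> \<le> (\<Sum>i<l. int (mu i) - int i - b i)"
    by (rule sum_mono2) (use below in \<open>auto simp: S_def\<close>)
  finally show False
    using deficit by simp
qed

lemma det_hmat_staircase_eq_0: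
  fixes mu :: "nat \<Rightarrow> nat"
  assumes "\<And>i j. i \<le> j \<Longrightarrow> mu j \<le> mu i"
    and "\<forall>i<l. b i \<le> int (mu i) - int i"
    and "(\<Sum>i<l. int (mu i) - int i - b i) < (\<Sum>i\<in>{k..<l}. int (mu i))"
  shows "det (hmat l b (\<lambda>j. k - min j k)) = 0"
  unfolding det_mat_expand
proof (rule sum.neutral, rule ballI)
  fix p assume "p \<in> {p. p permutes {0..<l}}"
  then have "(\<Prod>i=0..<l. hsym (k - min (p i) k) (b i + int (p i))) = 0"
    by (intro hmat_staircase_perm_term_eq_0[OF _ assms]) (simp add: atLeast0LessThan)
  then show "signof p * (\<Prod>i=0..<l. (\<lambda>(i, j). hsym (k - min j k) (b i + int j)) (i, p i)) = 0"
    by simp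
qed

lemma lowered_pdets_eval_eq_0:
  fixes mu :: "nat \<Rightarrow> nat"
  assumes "lowered_pdets l a W P"
    and a: "\<And>i. a i = int (mu i) - int i"
    and mono: "\<And>i j. i \<le> j \<Longrightarrow> mu j \<le> mu i"
    and "W < (\<Sum>i\<in>{k..<l}. mu i)"
  shows "eval_at k P = 0"
  using assms(1,4)
proof induction
  case (zero W)
  then show ?case by (simp add: eval_at_zero)
next
  case (add W P Q)
  then show ?case by (simp add: eval_at_add)
next
  case (pdet b W)
  have "int W < (\<Sum>i\<in>{k..<l}. int (mu i))"
    using pdet.prems by (simp only: of_nat_sum[symmetric] of_nat_less_iff)
  moreover have "(\<Sum>i<l. int (mu i) - int i - b i) = int W"
    using pdet.hyps(2) by (simp add: a)
  ultimately have deficit: "(\<Sum>i<l. int (mu i) - int i - b i) < (\<Sum>i\<in>{k..<l}. int (mu i))"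
    by linarith
  have "\<forall>i<l. b i \<le> int (mu i) - int i"
    using pdet.hyps(1) by (simp add: a)
  then have "det (hmat l b (\<lambda>j. k - min j k)) = 0"
    using det_hmat_staircase_eq_0[OF mono _ deficit] by blast
  then show ?case
    by (simp add: eval_at_pdet det_hmat_staircase)
qed

section \<open>Schur polynomials\<close>

lemma part_antimono:
  assumes "is_partition mu" "i \<le> j"
  shows "part mu j \<le> part mu i"
  using assms by (auto simp: part_def is_partition_def sorted_wrt_iff_nth_less le_less)

lemma schur_eq_pdet: "schur mu = pdet (length mu) (\<lambda>i. int (part mu i) - int i)"
  unfolding schur_def pdet_def by (intro arg_cong[where f = det] eq_matI) (auto simp: part_def)

lemma length_le_if_part_le:
  assumes "is_partition lam" "\<And>i. part lam i \<le> part mu i"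
  shows "length lam \<le> length mu"
proof (rule ccontr)
  assume short: "\<not> length lam \<le> length mu"
  let ?j = "length lam - 1"
  have "lam ! ?j \<in> set lam"
    using short by (intro nth_mem) simp
  then have "lam ! ?j \<noteq> 0"
    using assms(1) by (metis is_partition_def)
  then have "0 < part lam ?j"
    using short by (simp add: part_def)
  moreover have "part mu ?j = 0"
    using short by (simp add: part_def)
  ultimately show False
    using assms(2)[of ?j] by simp
qed

lemma N_lk_le_sum_part:
  assumes "is_partition lam" "\<And>i. part lam i \<le> part mu i"
  shows "N_lk lam k \<le> (\<Sum>i\<in>{k..<length mu}. part mu i)"
proof -
  have "N_lk lam k = (\<Sum>i\<in>{k..<length lam}. part lam i)"
  proof (cases "k \<le> length lam")
    case True
    then show ?thesis
      by (simp add: N_lk_def sum_list_sum_nth sum.shift_bounds_nat_ivl[symmetric] part_def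
          atLeast0LessThan[symmetric] add.commute)
  qed (simp add: N_lk_def)
  also have "\<dots> \<le> (\<Sum>i\<in>{k..<length lam}. part mu i)"
    by (intro sum_mono assms(2))
  also have "\<dots> \<le> (\<Sum>i\<in>{k..<length mu}. part mu i)"
    using length_le_if_part_le[OF assms] by (intro sum_mono2) auto
  finally show ?thesis .
qed

lemma eval_dpow_schur_eq_0:
  assumes "is_partition lam" "is_partition mu" and "\<And>i. part lam i \<le> part mu i"
    and "Poly_Mapping.lookup alpha 0 = 0" "wt alpha < N_lk lam k"
  shows "eval_at k (dpow alpha (schur mu)) = 0"
proof -
  let ?a = "\<lambda>i. int (part mu i) - int i"
  have "lowered_pdets (length mu) ?a 0 (schur mu)"
    unfolding schur_eq_pdet by (rule lowered_pdets.pdet) auto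
  then have "lowered_pdets (length mu) ?a (wt alpha) (dpow alpha (schur mu))"
    using lowered_pdets_dpow assms(4) by fastforce
  then show ?thesis
    using N_lk_le_sum_part[OF assms(1,3), of k] assms(5) part_antimono[OF assms(2)]
    by (intro lowered_pdets_eval_eq_0) auto
qed

theorem proposition3p1:
  fixes lam :: "nat list" and xi :: "nat list \<Rightarrow> complex"
    and k :: nat and alpha :: "nat \<Rightarrow>\<^sub>0 nat"
  assumes "is_partition lam"
    and "k \<le> length lam - 1" and "length lam \<ge> 1"
    and "Poly_Mapping.lookup alpha 0 = 0"
    and "wt alpha < N_lk lam k"
  shows "\<forall>beta. ((\<lambda>mu. (if mu = lam then 1 else xi mu)
                   * Poly_Mapping.lookup (eval_at k (dpow alpha (schur mu))) beta)
               has_sum 0) {mu. is_partition mu \<and> (mu = lam \<or> part_less lam mu)}"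
proof (intro allI has_sum_0)
  fix beta mu
  assume "mu \<in> {mu. is_partition mu \<and> (mu = lam \<or> part_less lam mu)}"
  then have "eval_at k (dpow alpha (schur mu)) = 0"
    using assms(1,4,5) by (intro eval_dpow_schur_eq_0) (auto simp: part_less_def)
  then show "(if mu = lam then 1 else xi mu) * Poly_Mapping.lookup (eval_at k (dpow alpha (schur mu))) beta = 0"
    by simp
qed

end
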